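(* Let $A\in\mathbb{R}^{n\times n}$. Then for $k>1$, $$A_\star^k=A_\star^{k-1}-\mathcal{U}\big(A\,\mathcal{U}(A^TA_\star^{k-1})\big),\qquad A_\star^1=I_n-\mathcal{U}\big(A\,\mathcal{U}(A^T)\big),$$ and for all $1\le j\le n$ and $k>1$, $$(A_\star^k)_{1:j,j}=(I_j-A|_{j\times j}A|_{j\times j}^T)(A_\star^{k-1})_{1:j,j}.$$ Moreover, let $M\in\mathbb{R}^{n\times n}$ and $\alpha>0$ be such that $\max_{1\le j\le n}\|I_j-\alpha M|_{j\times j}M|_{j\times j}^T\|_{S_\infty}<1$, and set $A:=\sqrt{\alpha}M$. Then $M$ has an $LU$-factorization $M=LU$ with $L$ unit lower triangular and $U$ upper triangular, and $$U^{-1}=\alpha\,\mathcal{U}\Big(M^T\Big(I_n+\sum_{m=1}^\infty A_\star^m\Big)\Big).$$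
   Context: $I_j$ is the $j\times j$ identity; $M|_{j\times j}$ denotes the upper left $j\times j$ submatrix of $M$; $M_{i:j,k:l}$ denotes the submatrix with rows $i..j$ and columns $k..l$. $\mathcal{U}(M)_{ij}:=M_{ij}$ for $i\le j$, $0$ for $i>j$. For $A\in\mathbb{R}^{n\times n}$ and $k\in\mathbb{N}$, $A_\star^k\in\mathbb{R}^{n\times n}$ is defined by $(A_\star^k)_{ij}:=\big((I_j-A|_{j\times j}A|_{j\times j}^T)^k\big)_{ij}$ for $i\le j$ and $(A_\star^k)_{ij}:=0$ for $i>j$. $\|\cdot\|_{S_\infty}$ is the spectral norm. *)

theory Defs
  imports Complex_Main "Jordan_Normal_Form.Matrix"
begin

text \<open>Matrices are Jordan_Normal_Form matrices, indices are 0-based.\<close>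

definition ul_sub :: "real mat \<Rightarrow> nat \<Rightarrow> real mat" where
  "ul_sub A j = mat j j (\<lambda>(i,l). A $$ (i,l))"

definition triu :: "real mat \<Rightarrow> real mat" where
  "triu M = mat (dim_row M) (dim_col M) (\<lambda>(i,j). if i \<le> j then M $$ (i,j) else 0)"

definition star_pow :: "real mat \<Rightarrow> nat \<Rightarrow> real mat" where
  "star_pow A k = mat (dim_row A) (dim_row A) (\<lambda>(i,j).
     if i \<le> j then ((1\<^sub>m (j+1) - ul_sub A (j+1) * (ul_sub A (j+1))\<^sup>T) ^\<^sub>m k) $$ (i,j)
     else 0)"

text \<open>For 1-based j: the column vector M_{1:j, j} (rows 1..j of column j).\<close>
definition col_top :: "real mat \<Rightarrow> nat \<Rightarrow> real vec" where
  "col_top M j = vec j (\<lambda>i. M $$ (i, j - 1))"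

definition spec_norm :: "real mat \<Rightarrow> real" where
  "spec_norm M = Sup {sqrt ((M *\<^sub>v x) \<bullet> (M *\<^sub>v x)) | x. x \<in> carrier_vec (dim_col M) \<and> x \<bullet> x = 1}"

definition unit_lower_triangular :: "real mat \<Rightarrow> bool" where
  "unit_lower_triangular L \<longleftrightarrow>
     (\<forall>i < dim_row L. L $$ (i,i) = 1 \<and> (\<forall>j. i < j \<and> j < dim_col L \<longrightarrow> L $$ (i,j) = 0))"

end

theory Submission
  imports Defs "Jordan_Normal_Form.Determinant"
begin

text \<open>
  For \<open>i \<le> j\<close> the entry \<open>(i,j)\<close> of \<open>A\<^sub>\<star>\<^sup>k\<close> is the entry \<open>(i,j)\<close> of \<open>P\<^sup>k\<close>, where
  \<open>P = I - A|A|\<^sup>T\<close> is formed from the leading \<open>(j+1) \<times> (j+1)\<close> block \<open>A|\<close> of \<open>A\<close>. So one more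
  factor \<open>P\<close> acts on the top of column \<open>j\<close> alone, which is the column recursion, and writing
  \<open>P\<^sup>k\<^sup>+\<^sup>1 = P\<^sup>k - A|(A|\<^sup>T P\<^sup>k)\<close> entrywise, the truncation of both inner sums to indices \<open>\<le> j\<close>
  is exactly what the two applications of \<open>triu\<close> express.

  For \<open>A = \<surd>\<alpha> M\<close> the block matrix is \<open>P = I - \<alpha> M|M|\<^sup>T\<close>, whose spectral norm is \<open>< 1\<close> by
  hypothesis; its entries are then bounded by powers of the norm, so the Neumann series
  \<open>\<Sum> P\<^sup>m\<close> converges to the inverse of \<open>\<alpha> M|M|\<^sup>T\<close>. Consequently column \<open>j\<close> of
  \<open>V = \<alpha> triu (M\<^sup>T (I + \<Sum> A\<^sub>\<star>\<^sup>m))\<close> is column \<open>j\<close> of the right inverse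
  \<open>\<alpha> M|\<^sup>T (\<alpha> M|M|\<^sup>T)\<^sup>-\<^sup>1\<close> of \<open>M|\<close>, i.e. \<open>M V\<close> is unit lower triangular. Hence
  \<open>det V \<noteq> 0\<close>, \<open>U = V\<^sup>-\<^sup>1\<close> is upper triangular and \<open>M = (M V) U\<close> is the LU factorization.
\<close>

section \<open>Matrix entries as finite sums\<close>

lemma index_mult_mat_sum:
  assumes "A \<in> carrier_mat n m" "B \<in> carrier_mat m p" "i < n" "j < p"
  shows "(A * B) $$ (i,j) = (\<Sum>l<m. A $$ (i,l) * B $$ (l,j))"
  using assms by (auto simp: scalar_prod_def atLeast0LessThan intro!: sum.cong)

lemma index_mult_mat_vec_sum:
  assumes "A \<in> carrier_mat n m" "v \<in> carrier_vec m" "i < n"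
  shows "(A *\<^sub>v v) $ i = (\<Sum>l<m. A $$ (i,l) * v $ l)"
  using assms by (auto simp: scalar_prod_def atLeast0LessThan intro!: sum.cong)

lemma index_mult_upper_triangular:
  assumes "A \<in> carrier_mat n m" "B \<in> carrier_mat m p" "upper_triangular B"
    and "i < n" "j < p" "j < m"
  shows "(A * B) $$ (i,j) = (\<Sum>l<Suc j. A $$ (i,l) * B $$ (l,j))"
proof -
  have "(A * B) $$ (i,j) = (\<Sum>l<m. A $$ (i,l) * B $$ (l,j))"
    by (rule index_mult_mat_sum[OF assms(1,2,4,5)])
  also have "\<dots> = (\<Sum>l<Suc j. A $$ (i,l) * B $$ (l,j))"
    by (rule sum.mono_neutral_right) (use assms in \<open>auto simp: upper_triangular_def\<close>)
  finally show ?thesis .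
qed

lemma pow_mat_Suc_left:
  assumes "A \<in> carrier_mat n n"
  shows "A ^\<^sub>m Suc k = A * A ^\<^sub>m k"
proof (induction k)
  case (Suc k)
  have "A ^\<^sub>m Suc (Suc k) = A * A ^\<^sub>m k * A"
    using Suc by simp
  also have "\<dots> = A * (A ^\<^sub>m k * A)"
    by (rule assoc_mult_mat[OF assms pow_carrier_mat[OF assms] assms])
  finally show ?case by simp
qed (use assms in simp)

lemma upper_triangular_inverse:
  fixes U V :: "'a :: field mat"
  assumes U: "U \<in> carrier_mat n n" and V: "V \<in> carrier_mat n n"
    and UV: "U * V = 1\<^sub>m n" and V_upper: "upper_triangular V"
    and diag: "\<And>j. j < n \<Longrightarrow> V $$ (j,j) \<noteq> 0"
  shows "upper_triangular U"
proof -
  have "U $$ (i,j) = 0" if "j < i" "i < n" for i j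
    using that
  proof (induction j arbitrary: i rule: less_induct)
    case (less j)
    have "0 = (U * V) $$ (i,j)"
      using UV less.prems by simp
    also have "\<dots> = (\<Sum>l<Suc j. U $$ (i,l) * V $$ (l,j))"
      using less.prems by (intro index_mult_upper_triangular[OF U V V_upper]) simp_all
    also have "\<dots> = U $$ (i,j) * V $$ (j,j)"
      using less.IH less.prems by simp
    finally show ?case
      using diag less.prems by simp
  qed
  then show ?thesis
    using U by auto
qed

section \<open>Upper triangular truncation\<close>

lemma dim_triu [simp]: "dim_row (triu X) = dim_row X" "dim_col (triu X) = dim_col X"
  unfolding triu_def by simp_all

lemma triu_carrier: "X \<in> carrier_mat n m \<Longrightarrow> triu X \<in> carrier_mat n m"
  unfolding carrier_mat_def by simp

lemma index_triu:
  "i < dim_row X \<Longrightarrow> j < dim_col X \<Longrightarrow> triu X $$ (i,j) = (if i \<le> j then X $$ (i,j) else 0)"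
  by (simp add: triu_def)

lemma index_mult_triu:
  assumes "A \<in> carrier_mat n m" "B \<in> carrier_mat m p" "i < n" "j < p" "j < m"
  shows "(A * triu B) $$ (i,j) = (\<Sum>l<Suc j. A $$ (i,l) * B $$ (l,j))"
proof -
  have "(A * triu B) $$ (i,j) = (\<Sum>l<m. A $$ (i,l) * triu B $$ (l,j))"
    by (rule index_mult_mat_sum[OF assms(1) triu_carrier[OF assms(2)] assms(3,4)])
  also have "\<dots> = (\<Sum>l<Suc j. A $$ (i,l) * triu B $$ (l,j))"
    by (rule sum.mono_neutral_right) (use assms in \<open>auto simp: index_triu\<close>)
  also have "\<dots> = (\<Sum>l<Suc j. A $$ (i,l) * B $$ (l,j))"
    using assms by (intro sum.cong) (auto simp: index_triu)
  finally show ?thesis .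
qed

section \<open>The recursions for \<open>A\<^sub>\<star>\<^sup>k\<close>\<close>

definition gram_residual :: "real mat \<Rightarrow> nat \<Rightarrow> real mat" where
  "gram_residual A s = 1\<^sub>m s - ul_sub A s * (ul_sub A s)\<^sup>T"

lemma ul_sub_carrier: "ul_sub A s \<in> carrier_mat s s"
  by (simp add: ul_sub_def)

lemma gram_residual_carrier: "gram_residual A s \<in> carrier_mat s s"
  unfolding gram_residual_def ul_sub_def by (rule minus_carrier_mat) auto

lemma index_gram_residual:
  assumes "i < s" "j < s"
  shows "gram_residual A s $$ (i,j) = (if i = j then 1 else 0) - (\<Sum>l<s. A $$ (i,l) * A $$ (j,l))"
proof -
  have "(ul_sub A s * (ul_sub A s)\<^sup>T) $$ (i,j) = (\<Sum>l<s. A $$ (i,l) * A $$ (j,l))"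
    using assms by (simp add: index_mult_mat_sum[of _ s s _ s] ul_sub_carrier) (simp add: ul_sub_def)
  then show ?thesis
    using assms by (simp add: gram_residual_def ul_sub_def)
qed

lemma sum_gram_residual:
  assumes "i < s"
  shows "(\<Sum>m<s. gram_residual A s $$ (i,m) * x m)
    = x i - (\<Sum>l<s. A $$ (i,l) * (\<Sum>m<s. A $$ (m,l) * x m))"
proof -
  have "(\<Sum>m<s. gram_residual A s $$ (i,m) * x m)
      = (\<Sum>m<s. (if m = i then x m else 0) - (\<Sum>l<s. A $$ (i,l) * A $$ (m,l) * x m))"
    using assms by (intro sum.cong) (auto simp: index_gram_residual left_diff_distrib sum_distrib_right)
  also have "\<dots> = x i - (\<Sum>m<s. \<Sum>l<s. A $$ (i,l) * A $$ (m,l) * x m)"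
    using assms by (simp add: sum_subtractf)
  also have "(\<Sum>m<s. \<Sum>l<s. A $$ (i,l) * A $$ (m,l) * x m) = (\<Sum>l<s. A $$ (i,l) * (\<Sum>m<s. A $$ (m,l) * x m))"
    by (subst sum.swap) (simp add: sum_distrib_left mult.assoc)
  finally show ?thesis .
qed

lemma star_pow_carrier: "star_pow A k \<in> carrier_mat (dim_row A) (dim_row A)"
  by (simp add: star_pow_def)

lemma index_star_pow:
  "i \<le> j \<Longrightarrow> j < dim_row A \<Longrightarrow> star_pow A k $$ (i,j) = (gram_residual A (Suc j) ^\<^sub>m k) $$ (i,j)"
  by (simp add: star_pow_def gram_residual_def)

lemma upper_triangular_star_pow: "upper_triangular (star_pow A k)"
  by (auto simp: star_pow_def)

lemma index_star_pow_Suc: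
  assumes "i \<le> j" "j < dim_row A"
  shows "star_pow A (Suc k) $$ (i,j)
    = (\<Sum>m<Suc j. gram_residual A (Suc j) $$ (i,m) * star_pow A k $$ (m,j))"
proof -
  let ?P = "gram_residual A (Suc j)"
  have "star_pow A (Suc k) $$ (i,j) = (?P ^\<^sub>m Suc k) $$ (i,j)"
    using assms by (rule index_star_pow)
  also have "\<dots> = (?P * ?P ^\<^sub>m k) $$ (i,j)"
    by (simp only: pow_mat_Suc_left[OF gram_residual_carrier])
  also have "\<dots> = (\<Sum>m<Suc j. ?P $$ (i,m) * (?P ^\<^sub>m k) $$ (m,j))"
    using assms by (simp add: index_mult_mat_sum[of _ "Suc j" "Suc j" _ "Suc j"] gram_residual_carrier)
  also have "\<dots> = (\<Sum>m<Suc j. ?P $$ (i,m) * star_pow A k $$ (m,j))"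
    using assms by (intro sum.cong) (simp_all add: index_star_pow)
  finally show ?thesis .
qed

lemma star_pow_one:
  assumes A: "A \<in> carrier_mat n n"
  shows "star_pow A 1 = 1\<^sub>m n - triu (A * triu (A\<^sup>T))"
proof (rule eq_matI)
  fix i j assume "i < dim_row (1\<^sub>m n - triu (A * triu (A\<^sup>T)))" "j < dim_col (1\<^sub>m n - triu (A * triu (A\<^sup>T)))"
  then have ij: "i < n" "j < n"
    using A by simp_all
  have "star_pow A 1 $$ (i,j) = gram_residual A (Suc j) $$ (i,j)" if "i \<le> j"
    using that A ij gram_residual_carrier[of A "Suc j"] by (simp add: index_star_pow)
  moreover have "(A * triu (A\<^sup>T)) $$ (i,j) = (\<Sum>l<Suc j. A $$ (i,l) * A\<^sup>T $$ (l,j))"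
    using A ij by (intro index_mult_triu[of _ n n]) auto
  moreover have "\<dots> = (\<Sum>l<Suc j. A $$ (i,l) * A $$ (j,l))"
    using A ij by (intro sum.cong) auto
  ultimately show "star_pow A 1 $$ (i,j) = (1\<^sub>m n - triu (A * triu (A\<^sup>T))) $$ (i,j)"
    using A ij by (auto simp: index_gram_residual index_triu star_pow_def)
qed (use A in \<open>simp_all add: star_pow_def\<close>)

lemma star_pow_Suc:
  assumes A: "A \<in> carrier_mat n n"
  shows "star_pow A (Suc k) = star_pow A k - triu (A * triu (A\<^sup>T * star_pow A k))"
proof (rule eq_matI)
  have S: "star_pow A k \<in> carrier_mat n n"
    using A star_pow_carrier[of A k] by simp
  fix i j assume "i < dim_row (star_pow A k - triu (A * triu (A\<^sup>T * star_pow A k)))"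
    "j < dim_col (star_pow A k - triu (A * triu (A\<^sup>T * star_pow A k)))"
  then have ij: "i < n" "j < n"
    using A S by simp_all
  show "star_pow A (Suc k) $$ (i,j) = (star_pow A k - triu (A * triu (A\<^sup>T * star_pow A k))) $$ (i,j)"
  proof (cases "i \<le> j")
    case True
    have AS: "(A\<^sup>T * star_pow A k) $$ (l,j) = (\<Sum>m<Suc j. A $$ (m,l) * star_pow A k $$ (m,j))"
      if "l < n" for l
    proof -
      have "(A\<^sup>T * star_pow A k) $$ (l,j) = (\<Sum>m<Suc j. A\<^sup>T $$ (l,m) * star_pow A k $$ (m,j))"
        using that A ij by (intro index_mult_upper_triangular[OF _ S upper_triangular_star_pow]) auto
      also have "\<dots> = (\<Sum>m<Suc j. A $$ (m,l) * star_pow A k $$ (m,j))"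
        using that A ij by (intro sum.cong) auto
      finally show ?thesis .
    qed
    have "(A * triu (A\<^sup>T * star_pow A k)) $$ (i,j)
        = (\<Sum>l<Suc j. A $$ (i,l) * (A\<^sup>T * star_pow A k) $$ (l,j))"
      using A S ij by (intro index_mult_triu[of _ n n]) auto
    also have "\<dots> = (\<Sum>l<Suc j. A $$ (i,l) * (\<Sum>m<Suc j. A $$ (m,l) * star_pow A k $$ (m,j)))"
      using ij by (intro sum.cong) (simp_all add: AS)
    finally have prod: "(A * triu (A\<^sup>T * star_pow A k)) $$ (i,j) = \<dots>" .
    have "star_pow A (Suc k) $$ (i,j)
        = (\<Sum>m<Suc j. gram_residual A (Suc j) $$ (i,m) * star_pow A k $$ (m,j))"
      using True A ij by (intro index_star_pow_Suc) auto
    also have "\<dots> = star_pow A k $$ (i,j) - (A * triu (A\<^sup>T * star_pow A k)) $$ (i,j)"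
      unfolding prod using True by (intro sum_gram_residual) simp
    finally show ?thesis
      using True A S ij by (simp add: index_triu)
  next
    case False
    then show ?thesis
      using A S ij by (simp add: star_pow_def index_triu)
  qed
qed (use A in \<open>simp_all add: star_pow_def\<close>)

lemma col_top_star_pow_Suc:
  assumes A: "A \<in> carrier_mat n n" and j: "j \<in> {1..n}"
  shows "col_top (star_pow A (Suc k)) j = gram_residual A j *\<^sub>v col_top (star_pow A k) j"
proof (rule eq_vecI)
  fix i assume "i < dim_vec (gram_residual A j *\<^sub>v col_top (star_pow A k) j)"
  then have i: "i < j"
    using gram_residual_carrier[of A j] by simp
  have "(gram_residual A j *\<^sub>v col_top (star_pow A k) j) $ i
      = (\<Sum>m<j. gram_residual A j $$ (i,m) * col_top (star_pow A k) j $ m)"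
    by (rule index_mult_mat_vec_sum[OF gram_residual_carrier]) (use i in \<open>auto simp: col_top_def\<close>)
  also have "\<dots> = (\<Sum>m<Suc (j - 1). gram_residual A (Suc (j - 1)) $$ (i,m) * star_pow A k $$ (m, j - 1))"
    using j by (intro sum.cong) (auto simp: col_top_def)
  also have "\<dots> = col_top (star_pow A (Suc k)) j $ i"
    using i j A by (simp add: index_star_pow_Suc col_top_def)
  finally show "col_top (star_pow A (Suc k)) j $ i = (gram_residual A j *\<^sub>v col_top (star_pow A k) j) $ i"
    by simp
qed (use gram_residual_carrier[of A j] in \<open>simp add: col_top_def\<close>)

section \<open>Spectral norm and Neumann series\<close>

lemma abs_index_le_sqrt_scalar_prod:
  fixes x :: "real vec"
  assumes "l < dim_vec x"
  shows "\<bar>x $ l\<bar> \<le> sqrt (x \<bullet> x)"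
proof -
  have "(x $ l)\<^sup>2 \<le> (\<Sum>i\<in>{0..<dim_vec x}. x $ i * x $ i)"
    unfolding power2_eq_square by (rule member_le_sum[where f = "\<lambda>i. x $ i * x $ i"]) (use assms in auto)
  then show ?thesis
    by (simp add: scalar_prod_def real_le_rsqrt)
qed

lemma scalar_prod_self_nonneg: "0 \<le> (x :: real vec) \<bullet> x"
  unfolding scalar_prod_def by (rule sum_nonneg) simp

lemma bdd_above_spec_norm_set:
  fixes Q :: "real mat"
  assumes Q: "Q \<in> carrier_mat r c"
  shows "bdd_above {sqrt ((Q *\<^sub>v x) \<bullet> (Q *\<^sub>v x)) | x. x \<in> carrier_vec (dim_col Q) \<and> x \<bullet> x = 1}"
proof (rule bdd_aboveI, safe)
  fix x :: "real vec" assume x: "x \<in> carrier_vec (dim_col Q)" "x \<bullet> x = 1"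
  have row_bound: "\<bar>(Q *\<^sub>v x) $ i\<bar> \<le> (\<Sum>l<c. \<bar>Q $$ (i,l)\<bar>)" if "i < r" for i
  proof -
    have "(Q *\<^sub>v x) $ i = (\<Sum>l<c. Q $$ (i,l) * x $ l)"
      using Q x that by (intro index_mult_mat_vec_sum[OF Q]) auto
    then have "\<bar>(Q *\<^sub>v x) $ i\<bar> \<le> (\<Sum>l<c. \<bar>Q $$ (i,l)\<bar> * \<bar>x $ l\<bar>)"
      by (simp add: order_trans[OF sum_abs] abs_mult)
    also have "\<dots> \<le> (\<Sum>l<c. \<bar>Q $$ (i,l)\<bar>)"
      using Q x abs_index_le_sqrt_scalar_prod[of _ x]
      by (intro sum_mono) (simp add: mult_left_le)
    finally show ?thesis .
  qed
  have "(Q *\<^sub>v x) \<bullet> (Q *\<^sub>v x) = (\<Sum>i<r. ((Q *\<^sub>v x) $ i)\<^sup>2)"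
    using Q by (simp add: scalar_prod_def power2_eq_square atLeast0LessThan)
  also have "\<dots> \<le> (\<Sum>i<r. (\<Sum>l<c. \<bar>Q $$ (i,l)\<bar>)\<^sup>2)"
    using row_bound by (intro sum_mono) (metis abs_ge_zero lessThan_iff power2_abs power_mono)
  finally show "sqrt ((Q *\<^sub>v x) \<bullet> (Q *\<^sub>v x)) \<le> sqrt (\<Sum>i<r. (\<Sum>l<c. \<bar>Q $$ (i,l)\<bar>)\<^sup>2)"
    by (rule real_sqrt_le_mono)
qed

lemma spec_norm_upper:
  assumes "Q \<in> carrier_mat r c" "x \<in> carrier_vec c" "x \<bullet> x = 1"
  shows "sqrt ((Q *\<^sub>v x) \<bullet> (Q *\<^sub>v x)) \<le> spec_norm Q"
  unfolding spec_norm_def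
  by (rule cSup_upper[OF _ bdd_above_spec_norm_set[OF assms(1)]]) (use assms in auto)

lemma unit_vec_scalar_prod_self:
  "j < n \<Longrightarrow> unit_vec n j \<bullet> unit_vec n j = (1 :: real)"
  unfolding scalar_prod_def by (simp add: unit_vec_def if_distrib[of "\<lambda>x. x * _"] cong: if_cong)

lemma spec_norm_nonneg:
  assumes Q: "Q \<in> carrier_mat r c" and "0 < c"
  shows "0 \<le> spec_norm Q"
proof -
  have "0 \<le> sqrt ((Q *\<^sub>v unit_vec c 0) \<bullet> (Q *\<^sub>v unit_vec c 0))"
    by (simp add: scalar_prod_self_nonneg)
  also have "\<dots> \<le> spec_norm Q"
    using assms unit_vec_scalar_prod_self[of 0 c] by (intro spec_norm_upper[OF Q]) auto
  finally show ?thesis .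
qed

lemma norm_mult_mat_vec_le:
  fixes Q :: "real mat"
  assumes Q: "Q \<in> carrier_mat r c" and x: "x \<in> carrier_vec c"
  shows "sqrt ((Q *\<^sub>v x) \<bullet> (Q *\<^sub>v x)) \<le> spec_norm Q * sqrt (x \<bullet> x)"
proof (cases "x \<bullet> x = 0")
  case True
  then have "x = 0\<^sub>v c"
    using x abs_index_le_sqrt_scalar_prod[of _ x] by (intro eq_vecI) auto
  moreover have "Q *\<^sub>v 0\<^sub>v c = 0\<^sub>v r"
    using Q by (intro eq_vecI) auto
  ultimately show ?thesis
    using True by simp
next
  case False
  define t where "t = sqrt (x \<bullet> x)"
  have t: "0 < t"
    using False scalar_prod_self_nonneg[of x] by (simp add: t_def)
  have "sqrt ((Q *\<^sub>v x) \<bullet> (Q *\<^sub>v x)) / t = sqrt ((Q *\<^sub>v ((1 / t) \<cdot>\<^sub>v x)) \<bullet> (Q *\<^sub>v ((1 / t) \<cdot>\<^sub>v x)))"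
    using Q x t by (simp add: mult_mat_vec real_sqrt_mult real_sqrt_divide)
  also have "\<dots> \<le> spec_norm Q"
    using x t False scalar_prod_self_nonneg[of x]
    by (intro spec_norm_upper[OF Q]) (auto simp: t_def)
  finally show ?thesis
    using t by (simp add: t_def divide_le_eq mult.commute)
qed

lemma abs_index_pow_mat_le:
  fixes Q :: "real mat"
  assumes Q: "Q \<in> carrier_mat s s" and ij: "i < s" "j < s"
  shows "\<bar>(Q ^\<^sub>m m) $$ (i,j)\<bar> \<le> spec_norm Q ^ m"
proof -
  have column_bound: "sqrt ((Q ^\<^sub>m m *\<^sub>v unit_vec s j) \<bullet> (Q ^\<^sub>m m *\<^sub>v unit_vec s j)) \<le> spec_norm Q ^ m"
  proof (induction m)
    case 0
    show ?case
      using Q ij by (simp add: unit_vec_scalar_prod_self)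
  next
    case (Suc m)
    have "Q ^\<^sub>m Suc m *\<^sub>v unit_vec s j = Q *\<^sub>v (Q ^\<^sub>m m *\<^sub>v unit_vec s j)"
      unfolding pow_mat_Suc_left[OF Q] using Q by (intro assoc_mult_mat_vec) auto
    then have "sqrt ((Q ^\<^sub>m Suc m *\<^sub>v unit_vec s j) \<bullet> (Q ^\<^sub>m Suc m *\<^sub>v unit_vec s j))
        \<le> spec_norm Q * sqrt ((Q ^\<^sub>m m *\<^sub>v unit_vec s j) \<bullet> (Q ^\<^sub>m m *\<^sub>v unit_vec s j))"
      using norm_mult_mat_vec_le[OF Q mult_mat_vec_carrier[OF pow_carrier_mat[OF Q] unit_vec_carrier]]
      by simp
    also have "\<dots> \<le> spec_norm Q * spec_norm Q ^ m"
      using Suc spec_norm_nonneg[OF Q] ij by (intro mult_left_mono) auto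
    finally show ?case
      by simp
  qed
  have "(Q ^\<^sub>m m) $$ (i,j) = (Q ^\<^sub>m m *\<^sub>v unit_vec s j) $ i"
    using Q ij by (simp add: index_mult_mat_vec_sum[of _ s s] sum.delta)
  then show ?thesis
    using Q ij abs_index_le_sqrt_scalar_prod[of i "Q ^\<^sub>m m *\<^sub>v unit_vec s j"] column_bound
    by simp
qed

definition neumann_sum :: "real mat \<Rightarrow> real mat" where
  "neumann_sum Q = mat (dim_row Q) (dim_row Q) (\<lambda>(i,j). \<Sum>m. (Q ^\<^sub>m m) $$ (i,j))"

lemma summable_index_pow_mat:
  assumes Q: "Q \<in> carrier_mat s s" and "spec_norm Q < 1" "i < s" "j < s"
  shows "summable (\<lambda>m. (Q ^\<^sub>m m) $$ (i,j))"
proof (rule summable_comparison_test)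
  show "\<exists>N. \<forall>m\<ge>N. norm ((Q ^\<^sub>m m) $$ (i,j)) \<le> spec_norm Q ^ m"
    using abs_index_pow_mat_le[OF assms(1,3,4)] by auto
  show "summable (\<lambda>m. spec_norm Q ^ m)"
    using assms spec_norm_nonneg[OF Q] by (intro summable_geometric) auto
qed

lemma neumann_partial_sum:
  fixes Q :: "'a :: ring_1 mat"
  assumes Q: "Q \<in> carrier_mat s s" and ij: "i < s" "j < s"
  shows "(\<Sum>l<s. (1\<^sub>m s - Q) $$ (i,l) * (\<Sum>m<N. (Q ^\<^sub>m m) $$ (l,j)))
    = (if i = j then 1 else 0) - (Q ^\<^sub>m N) $$ (i,j)"
proof -
  have IQ: "1\<^sub>m s - Q \<in> carrier_mat s s"
    by (rule minus_carrier_mat[OF Q])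
  have step: "(\<Sum>l<s. (1\<^sub>m s - Q) $$ (i,l) * (Q ^\<^sub>m m) $$ (l,j))
      = (Q ^\<^sub>m m) $$ (i,j) - (Q ^\<^sub>m Suc m) $$ (i,j)" for m
  proof -
    have "(\<Sum>l<s. (1\<^sub>m s - Q) $$ (i,l) * (Q ^\<^sub>m m) $$ (l,j)) = ((1\<^sub>m s - Q) * Q ^\<^sub>m m) $$ (i,j)"
      by (rule index_mult_mat_sum[symmetric, OF IQ pow_carrier_mat[OF Q] ij])
    also have "(1\<^sub>m s - Q) * Q ^\<^sub>m m = Q ^\<^sub>m m - Q * Q ^\<^sub>m m"
      by (subst minus_mult_distrib_mat[of "1\<^sub>m s" s s Q "Q ^\<^sub>m m" s]) (use Q in auto)
    finally show ?thesis
      unfolding pow_mat_Suc_left[OF Q] using Q ij by simp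
  qed
  have "(\<Sum>l<s. (1\<^sub>m s - Q) $$ (i,l) * (\<Sum>m<N. (Q ^\<^sub>m m) $$ (l,j)))
      = (\<Sum>m<N. \<Sum>l<s. (1\<^sub>m s - Q) $$ (i,l) * (Q ^\<^sub>m m) $$ (l,j))"
    unfolding sum_distrib_left by (rule sum.swap)
  also have "\<dots> = (\<Sum>m<N. (Q ^\<^sub>m m) $$ (i,j) - (Q ^\<^sub>m Suc m) $$ (i,j))"
    by (simp only: step)
  also have "\<dots> = (if i = j then 1 else 0) - (Q ^\<^sub>m N) $$ (i,j)"
    using Q ij by (subst sum_lessThan_telescope'[of "\<lambda>m. (Q ^\<^sub>m m) $$ (i,j)"]) simp
  finally show ?thesis .
qed

lemma neumann_sum_inverse:
  assumes Q: "Q \<in> carrier_mat s s" and q: "spec_norm Q < 1"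
  shows "(1\<^sub>m s - Q) * neumann_sum Q = 1\<^sub>m s"
proof (rule eq_matI)
  have IQ: "1\<^sub>m s - Q \<in> carrier_mat s s"
    by (rule minus_carrier_mat[OF Q])
  have S: "neumann_sum Q \<in> carrier_mat s s"
    using Q by (simp add: neumann_sum_def)
  fix i j assume "i < dim_row (1\<^sub>m s :: real mat)" "j < dim_col (1\<^sub>m s :: real mat)"
  then have ij: "i < s" "j < s"
    by simp_all
  have summable: "summable (\<lambda>m. (Q ^\<^sub>m m) $$ (l,j))" if "l < s" for l
    using summable_index_pow_mat[OF Q q that ij(2)] .
  have "(\<lambda>N. \<Sum>l<s. (1\<^sub>m s - Q) $$ (i,l) * (\<Sum>m<N. (Q ^\<^sub>m m) $$ (l,j)))
      \<longlonglongrightarrow> (\<Sum>l<s. (1\<^sub>m s - Q) $$ (i,l) * neumann_sum Q $$ (l,j))"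
    using Q ij summable by (auto simp: neumann_sum_def intro!: tendsto_sum tendsto_mult_left summable_LIMSEQ)
  moreover have "(\<lambda>N. \<Sum>l<s. (1\<^sub>m s - Q) $$ (i,l) * (\<Sum>m<N. (Q ^\<^sub>m m) $$ (l,j)))
      \<longlonglongrightarrow> (if i = j then 1 else 0) - 0"
    unfolding neumann_partial_sum[OF Q ij]
    by (intro tendsto_diff tendsto_const summable_LIMSEQ_zero summable[OF ij(1)])
  ultimately have "(\<Sum>l<s. (1\<^sub>m s - Q) $$ (i,l) * neumann_sum Q $$ (l,j)) = (if i = j then 1 else 0)"
    by (simp add: LIMSEQ_unique)
  moreover have "((1\<^sub>m s - Q) * neumann_sum Q) $$ (i,j)
      = (\<Sum>l<s. (1\<^sub>m s - Q) $$ (i,l) * neumann_sum Q $$ (l,j))"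
    by (rule index_mult_mat_sum[OF IQ S ij])
  ultimately show "((1\<^sub>m s - Q) * neumann_sum Q) $$ (i,j) = 1\<^sub>m s $$ (i,j)"
    using ij by simp
qed (use Q in \<open>simp_all add: neumann_sum_def\<close>)

lemma gram_right_inverse:
  fixes B :: "real mat"
  assumes B: "B \<in> carrier_mat s s"
    and norm: "spec_norm (1\<^sub>m s - \<alpha> \<cdot>\<^sub>m (B * B\<^sup>T)) < 1"
  shows "B * (\<alpha> \<cdot>\<^sub>m (B\<^sup>T * neumann_sum (1\<^sub>m s - \<alpha> \<cdot>\<^sub>m (B * B\<^sup>T)))) = 1\<^sub>m s"
proof -
  let ?G = "\<alpha> \<cdot>\<^sub>m (B * B\<^sup>T)"
  let ?S = "neumann_sum (1\<^sub>m s - ?G)"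
  have G: "?G \<in> carrier_mat s s"
    using B by simp
  have S: "?S \<in> carrier_mat s s"
    using B by (simp add: neumann_sum_def)
  have "1\<^sub>m s - (1\<^sub>m s - ?G) = ?G"
    using G by (intro eq_matI) auto
  then have inverse: "?G * ?S = 1\<^sub>m s"
    using neumann_sum_inverse[OF minus_carrier_mat[OF G] norm] by simp
  have "B * (\<alpha> \<cdot>\<^sub>m (B\<^sup>T * ?S)) = \<alpha> \<cdot>\<^sub>m (B * (B\<^sup>T * ?S))"
    using B S by (intro mult_smult_distrib) auto
  also have "B * (B\<^sup>T * ?S) = B * B\<^sup>T * ?S"
    using B S by (intro assoc_mult_mat[symmetric]) auto
  also have "\<alpha> \<cdot>\<^sub>m (B * B\<^sup>T * ?S) = ?G * ?S"
    using B S by (intro mult_smult_assoc_mat[symmetric]) auto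
  finally show ?thesis
    using inverse by simp
qed

section \<open>The LU factorization\<close>

lemma gram_residual_sqrt_smult:
  fixes M :: "real mat"
  assumes "s \<le> dim_row M" "s \<le> dim_col M" "0 \<le> \<alpha>"
  shows "gram_residual (sqrt \<alpha> \<cdot>\<^sub>m M) s = 1\<^sub>m s - \<alpha> \<cdot>\<^sub>m (ul_sub M s * (ul_sub M s)\<^sup>T)"
proof (rule eq_matI)
  fix i j assume "i < dim_row (1\<^sub>m s - \<alpha> \<cdot>\<^sub>m (ul_sub M s * (ul_sub M s)\<^sup>T))"
    "j < dim_col (1\<^sub>m s - \<alpha> \<cdot>\<^sub>m (ul_sub M s * (ul_sub M s)\<^sup>T))"
  then have ij: "i < s" "j < s"
    by (simp_all add: ul_sub_def)
  have "(ul_sub M s * (ul_sub M s)\<^sup>T) $$ (i,j) = (\<Sum>l<s. M $$ (i,l) * M $$ (j,l))"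
    using ij by (simp add: index_mult_mat_sum[OF ul_sub_carrier transpose_carrier_mat[THEN iffD2, OF ul_sub_carrier]])
      (simp add: ul_sub_def)
  moreover have "(\<Sum>l<s. (sqrt \<alpha> \<cdot>\<^sub>m M) $$ (i,l) * (sqrt \<alpha> \<cdot>\<^sub>m M) $$ (j,l))
      = \<alpha> * (\<Sum>l<s. M $$ (i,l) * M $$ (j,l))"
    unfolding sum_distrib_left
  proof (intro sum.cong)
    fix l assume "l \<in> {..<s}"
    then have "(sqrt \<alpha> \<cdot>\<^sub>m M) $$ (i,l) * (sqrt \<alpha> \<cdot>\<^sub>m M) $$ (j,l)
        = (sqrt \<alpha> * sqrt \<alpha>) * (M $$ (i,l) * M $$ (j,l))"
      using assms ij by (simp add: ac_simps)
    then show "(sqrt \<alpha> \<cdot>\<^sub>m M) $$ (i,l) * (sqrt \<alpha> \<cdot>\<^sub>m M) $$ (j,l) = \<alpha> * (M $$ (i,l) * M $$ (j,l))"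
      using assms(3) by simp
  qed simp
  ultimately show "gram_residual (sqrt \<alpha> \<cdot>\<^sub>m M) s $$ (i,j)
      = (1\<^sub>m s - \<alpha> \<cdot>\<^sub>m (ul_sub M s * (ul_sub M s)\<^sup>T)) $$ (i,j)"
    using ij by (simp add: index_gram_residual ul_sub_def)
qed (simp_all add: gram_residual_def ul_sub_def)

definition star_series :: "real mat \<Rightarrow> real mat" where
  "star_series A = 1\<^sub>m (dim_row A)
     + mat (dim_row A) (dim_row A) (\<lambda>(i,j). \<Sum>m. star_pow A (Suc m) $$ (i,j))"

lemma star_series_carrier: "star_series A \<in> carrier_mat (dim_row A) (dim_row A)"
  by (simp add: star_series_def)

lemma upper_triangular_star_series: "upper_triangular (star_series A)"
  unfolding upper_triangular_def star_series_def star_pow_def by simp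

lemma summable_star_pow:
  assumes "i < dim_row A" "j < dim_row A" and norm: "spec_norm (gram_residual A (Suc j)) < 1"
  shows "summable (\<lambda>m. star_pow A (Suc m) $$ (i,j))"
proof (cases "i \<le> j")
  case True
  have "summable (\<lambda>m. (gram_residual A (Suc j) ^\<^sub>m m) $$ (i,j))"
    using True by (intro summable_index_pow_mat[OF gram_residual_carrier norm]) auto
  then have "summable (\<lambda>m. (gram_residual A (Suc j) ^\<^sub>m Suc m) $$ (i,j))"
    using summable_ignore_initial_segment[of _ 1] by (simp del: pow_mat.simps)
  then show ?thesis
    by (simp only: index_star_pow[OF True assms(2)])
next
  case False
  then show ?thesis
    using assms by (simp add: star_pow_def)
qed

lemma index_star_series:
  assumes ij: "i \<le> j" "j < dim_row A" and norm: "spec_norm (gram_residual A (Suc j)) < 1"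
  shows "star_series A $$ (i,j) = neumann_sum (gram_residual A (Suc j)) $$ (i,j)"
proof -
  let ?P = "gram_residual A (Suc j)"
  have summable: "summable (\<lambda>m. (?P ^\<^sub>m m) $$ (i,j))"
    using ij by (intro summable_index_pow_mat[OF gram_residual_carrier norm]) auto
  have "star_series A $$ (i,j) = (?P ^\<^sub>m 0) $$ (i,j) + (\<Sum>m. (?P ^\<^sub>m Suc m) $$ (i,j))"
    using ij gram_residual_carrier[of A "Suc j"] by (simp add: star_series_def index_star_pow)
  also have "\<dots> = (\<Sum>m. (?P ^\<^sub>m m) $$ (i,j))"
    unfolding suminf_split_head[OF summable] by simp
  finally show ?thesis
    using ij gram_residual_carrier[of A "Suc j"] by (simp add: neumann_sum_def)
qed

lemma index_transpose_mult_star_series: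
  fixes M :: "real mat"
  assumes M: "M \<in> carrier_mat n n" and \<alpha>: "0 \<le> \<alpha>" and lj: "l \<le> j" "j < n"
    and norm: "spec_norm (1\<^sub>m (Suc j) - \<alpha> \<cdot>\<^sub>m (ul_sub M (Suc j) * (ul_sub M (Suc j))\<^sup>T)) < 1"
  shows "(M\<^sup>T * star_series (sqrt \<alpha> \<cdot>\<^sub>m M)) $$ (l,j)
    = ((ul_sub M (Suc j))\<^sup>T * neumann_sum (1\<^sub>m (Suc j) - \<alpha> \<cdot>\<^sub>m (ul_sub M (Suc j) * (ul_sub M (Suc j))\<^sup>T))) $$ (l,j)"
proof -
  let ?A = "sqrt \<alpha> \<cdot>\<^sub>m M"
  let ?X = "star_series ?A"
  let ?B = "ul_sub M (Suc j)"
  let ?S = "neumann_sum (1\<^sub>m (Suc j) - \<alpha> \<cdot>\<^sub>m (?B * ?B\<^sup>T))"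
  have X: "?X \<in> carrier_mat n n"
    using M star_series_carrier[of ?A] by simp
  have S: "?S \<in> carrier_mat (Suc j) (Suc j)"
    by (simp add: neumann_sum_def ul_sub_def)
  have residual: "gram_residual ?A (Suc j) = 1\<^sub>m (Suc j) - \<alpha> \<cdot>\<^sub>m (?B * ?B\<^sup>T)"
    using M lj \<alpha> by (intro gram_residual_sqrt_smult) auto
  have "(M\<^sup>T * ?X) $$ (l,j) = (\<Sum>m<Suc j. M\<^sup>T $$ (l,m) * ?X $$ (m,j))"
    using M lj by (intro index_mult_upper_triangular[OF _ X upper_triangular_star_series]) auto
  also have "\<dots> = (\<Sum>m<Suc j. ?B\<^sup>T $$ (l,m) * ?S $$ (m,j))"
    using M lj norm by (intro sum.cong) (auto simp: index_star_series residual ul_sub_def)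
  also have "\<dots> = (?B\<^sup>T * ?S) $$ (l,j)"
    using lj by (intro index_mult_mat_sum[symmetric, OF _ S]) (auto simp: ul_sub_def)
  finally show ?thesis .
qed

lemma unit_lower_triangular_mult_triu_star_series:
  fixes M :: "real mat"
  assumes M: "M \<in> carrier_mat n n" and \<alpha>: "0 \<le> \<alpha>"
    and norm: "\<forall>s\<in>{1..n}. spec_norm (1\<^sub>m s - \<alpha> \<cdot>\<^sub>m (ul_sub M s * (ul_sub M s)\<^sup>T)) < 1"
  shows "unit_lower_triangular (M * (\<alpha> \<cdot>\<^sub>m triu (M\<^sup>T * star_series (sqrt \<alpha> \<cdot>\<^sub>m M))))"
proof -
  let ?Y = "M\<^sup>T * star_series (sqrt \<alpha> \<cdot>\<^sub>m M)"
  define L where "L = M * (\<alpha> \<cdot>\<^sub>m triu ?Y)"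
  have Y: "?Y \<in> carrier_mat n n"
    using M star_series_carrier[of "sqrt \<alpha> \<cdot>\<^sub>m M"] by simp
  have L: "L \<in> carrier_mat n n"
    using M Y by (simp add: L_def triu_carrier)
  have "L $$ (i,j) = (if i = j then 1 else 0)" if ij: "i \<le> j" "j < n" for i j
  proof -
    let ?B = "ul_sub M (Suc j)"
    let ?S = "neumann_sum (1\<^sub>m (Suc j) - \<alpha> \<cdot>\<^sub>m (?B * ?B\<^sup>T))"
    have norm_j: "spec_norm (1\<^sub>m (Suc j) - \<alpha> \<cdot>\<^sub>m (?B * ?B\<^sup>T)) < 1"
      using norm ij by auto
    have BS: "?B\<^sup>T * ?S \<in> carrier_mat (Suc j) (Suc j)"
      using ul_sub_carrier[of M "Suc j"] by (simp add: neumann_sum_def)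
    have column: "?Y $$ (l,j) = (?B\<^sup>T * ?S) $$ (l,j)" if "l \<le> j" for l
      using that ij(2) norm_j by (rule index_transpose_mult_star_series[OF M \<alpha>])
    have "(M * triu ?Y) $$ (i,j) = (\<Sum>l<Suc j. M $$ (i,l) * ?Y $$ (l,j))"
      using ij by (intro index_mult_triu[OF M Y]) auto
    also have "\<dots> = (\<Sum>l<Suc j. ?B $$ (i,l) * (?B\<^sup>T * ?S) $$ (l,j))"
      using ij by (intro sum.cong) (auto simp: column ul_sub_def)
    also have "\<dots> = (?B * (?B\<^sup>T * ?S)) $$ (i,j)"
      using ij by (intro index_mult_mat_sum[symmetric, OF ul_sub_carrier BS]) auto
    finally have product: "(M * triu ?Y) $$ (i,j) = (?B * (?B\<^sup>T * ?S)) $$ (i,j)" .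
    have "L $$ (i,j) = \<alpha> * (M * triu ?Y) $$ (i,j)"
      using carrier_matD[OF M] carrier_matD[OF Y] ij
      by (simp add: L_def mult_smult_distrib[OF M triu_carrier[OF Y]])
    also have "\<dots> = (?B * (\<alpha> \<cdot>\<^sub>m (?B\<^sup>T * ?S))) $$ (i,j)"
      unfolding product using ij carrier_matD[OF BS]
      by (simp add: mult_smult_distrib[OF ul_sub_carrier BS] ul_sub_def)
    also have "?B * (\<alpha> \<cdot>\<^sub>m (?B\<^sup>T * ?S)) = 1\<^sub>m (Suc j)"
      by (rule gram_right_inverse[OF ul_sub_carrier norm_j])
    finally show ?thesis
      using ij by simp
  qed
  then have "unit_lower_triangular L"
    using L by (auto simp: unit_lower_triangular_def)
  then show ?thesis
    by (simp add: L_def)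
qed

lemma LU_of_unit_lower_triangular_product:
  fixes M V :: "real mat"
  assumes M: "M \<in> carrier_mat n n" and V: "V \<in> carrier_mat n n" and V_upper: "upper_triangular V"
    and L: "unit_lower_triangular (M * V)"
  obtains U where "U \<in> carrier_mat n n" "upper_triangular U"
    "inverts_mat U V" "inverts_mat V U" "M = M * V * U"
proof -
  have MV: "M * V \<in> carrier_mat n n"
    using M V by simp
  have "det (M * V) = prod_list (diag_mat (M * V))"
    using L carrier_matD[OF MV] by (intro det_lower_triangular[OF _ MV]) (auto simp: unit_lower_triangular_def)
  also have "\<dots> = 1"
    using L carrier_matD[OF MV] by (simp add: prod_list_diag_prod unit_lower_triangular_def)
  finally have "det M * det V = 1"
    by (simp add: det_mult[OF M V])
  then have det_V: "det V \<noteq> 0"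
    by auto
  have diag: "V $$ (j,j) \<noteq> 0" if "j < n" for j
    using upper_triangular_imp_det_eq_0_iff[OF V V_upper] det_V that V
    by (auto simp: diag_mat_def)
  obtain U where U: "U \<in> carrier_mat n n" "U * V = 1\<^sub>m n" "V * U = 1\<^sub>m n"
    using det_non_zero_imp_unit[OF V det_V, of "()"] unfolding Units_def ring_mat_def by auto
  have "M * V * U = M"
    using M V U by (simp add: assoc_mult_mat[OF M V U(1)])
  then show ?thesis
    using U V upper_triangular_inverse[OF U(1) V U(2) V_upper diag]
    by (intro that) (auto simp: inverts_mat_def)
qed

lemma LU_factorization_star_series:
  fixes M :: "real mat"
  assumes M: "M \<in> carrier_mat n n" and \<alpha>: "0 \<le> \<alpha>"
    and norm: "\<forall>s\<in>{1..n}. spec_norm (1\<^sub>m s - \<alpha> \<cdot>\<^sub>m (ul_sub M s * (ul_sub M s)\<^sup>T)) < 1"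
  defines "V \<equiv> \<alpha> \<cdot>\<^sub>m triu (M\<^sup>T * star_series (sqrt \<alpha> \<cdot>\<^sub>m M))"
  obtains L U where "L \<in> carrier_mat n n" "U \<in> carrier_mat n n" "unit_lower_triangular L"
    "upper_triangular U" "M = L * U" "invertible_mat U" "inverts_mat U V" "inverts_mat V U"
proof -
  have X: "star_series (sqrt \<alpha> \<cdot>\<^sub>m M) \<in> carrier_mat n n"
    using M star_series_carrier[of "sqrt \<alpha> \<cdot>\<^sub>m M"] by simp
  have V: "V \<in> carrier_mat n n"
    using M X by (simp add: V_def triu_carrier)
  have "upper_triangular V"
    using M X unfolding V_def upper_triangular_def triu_def by auto
  moreover have L: "unit_lower_triangular (M * V)"
    unfolding V_def by (rule unit_lower_triangular_mult_triu_star_series[OF M \<alpha> norm])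
  ultimately obtain U where U: "U \<in> carrier_mat n n" "upper_triangular U"
      "inverts_mat U V" "inverts_mat V U" "M = M * V * U"
    using LU_of_unit_lower_triangular_product[OF M V] by blast
  have "invertible_mat U"
    using U V unfolding invertible_mat_def by auto
  then show ?thesis
    using that[of "M * V" U] M V L U by simp
qed

theorem mainTheorem6:
  fixes n :: nat
  shows
  "(\<forall>A \<in> carrier_mat n n.
      star_pow A 1 = 1\<^sub>m n - triu (A * triu (A\<^sup>T))
    \<and> (\<forall>k > 1. star_pow A k = star_pow A (k - 1) - triu (A * triu (A\<^sup>T * star_pow A (k - 1))))
    \<and> (\<forall>j \<in> {1..n}. \<forall>k > 1.
          col_top (star_pow A k) j
          = (1\<^sub>m j - ul_sub A j * (ul_sub A j)\<^sup>T) *\<^sub>v col_top (star_pow A (k - 1)) j))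
   \<and> (\<forall>(M :: real mat) (\<alpha> :: real). M \<in> carrier_mat n n \<longrightarrow> \<alpha> > 0 \<longrightarrow>
        (\<forall>j \<in> {1..n}. spec_norm (1\<^sub>m j - \<alpha> \<cdot>\<^sub>m (ul_sub M j * (ul_sub M j)\<^sup>T)) < 1) \<longrightarrow>
        (let A = sqrt \<alpha> \<cdot>\<^sub>m M in
          (\<forall>i < n. \<forall>j < n. summable (\<lambda>m. star_pow A (Suc m) $$ (i,j)))
          \<and> (\<exists>L U. L \<in> carrier_mat n n \<and> U \<in> carrier_mat n n
               \<and> unit_lower_triangular L \<and> upper_triangular U \<and> M = L * U
               \<and> invertible_mat U
               \<and> inverts_mat U (\<alpha> \<cdot>\<^sub>m triu (M\<^sup>T * (1\<^sub>m n + mat n n (\<lambda>(i,j). \<Sum>m. star_pow A (Suc m) $$ (i,j)))))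
               \<and> inverts_mat (\<alpha> \<cdot>\<^sub>m triu (M\<^sup>T * (1\<^sub>m n + mat n n (\<lambda>(i,j). \<Sum>m. star_pow A (Suc m) $$ (i,j))))) U)))"
proof (intro conjI ballI allI impI)
  fix A :: "real mat" assume A: "A \<in> carrier_mat n n"
  show "star_pow A 1 = 1\<^sub>m n - triu (A * triu (A\<^sup>T))"
    by (rule star_pow_one[OF A])
next
  fix A :: "real mat" and k :: nat assume A: "A \<in> carrier_mat n n" and k: "1 < k"
  show "star_pow A k = star_pow A (k - 1) - triu (A * triu (A\<^sup>T * star_pow A (k - 1)))"
    using star_pow_Suc[OF A, of "k - 1"] k by simp
next
  fix A :: "real mat" and j k :: nat assume A: "A \<in> carrier_mat n n" and j: "j \<in> {1..n}" and k: "1 < k"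
  show "col_top (star_pow A k) j
      = (1\<^sub>m j - ul_sub A j * (ul_sub A j)\<^sup>T) *\<^sub>v col_top (star_pow A (k - 1)) j"
    using col_top_star_pow_Suc[OF A j, of "k - 1"] k by (simp add: gram_residual_def)
next
  fix M :: "real mat" and \<alpha> :: real
  assume M: "M \<in> carrier_mat n n" and \<alpha>: "\<alpha> > 0"
    and norm: "\<forall>j \<in> {1..n}. spec_norm (1\<^sub>m j - \<alpha> \<cdot>\<^sub>m (ul_sub M j * (ul_sub M j)\<^sup>T)) < 1"
  let ?A = "sqrt \<alpha> \<cdot>\<^sub>m M"
  have "spec_norm (gram_residual ?A (Suc j)) < 1" if "j < n" for j
    using norm M \<alpha> that by (simp add: gram_residual_sqrt_smult)
  then have "\<forall>i < n. \<forall>j < n. summable (\<lambda>m. star_pow ?A (Suc m) $$ (i,j))"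
    using M by (auto intro: summable_star_pow)
  moreover obtain L U where "L \<in> carrier_mat n n" "U \<in> carrier_mat n n" "unit_lower_triangular L"
    "upper_triangular U" "M = L * U" "invertible_mat U"
    "inverts_mat U (\<alpha> \<cdot>\<^sub>m triu (M\<^sup>T * star_series ?A))" "inverts_mat (\<alpha> \<cdot>\<^sub>m triu (M\<^sup>T * star_series ?A)) U"
    using LU_factorization_star_series[OF M _ norm] \<alpha> by auto
  ultimately show "let A = ?A in
      (\<forall>i < n. \<forall>j < n. summable (\<lambda>m. star_pow A (Suc m) $$ (i,j)))
      \<and> (\<exists>L U. L \<in> carrier_mat n n \<and> U \<in> carrier_mat n n
           \<and> unit_lower_triangular L \<and> upper_triangular U \<and> M = L * U
           \<and> invertible_mat U
           \<and> inverts_mat U (\<alpha> \<cdot>\<^sub>m triu (M\<^sup>T * (1\<^sub>m n + mat n n (\<lambda>(i,j). \<Sum>m. star_pow A (Suc m) $$ (i,j)))))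
           \<and> inverts_mat (\<alpha> \<cdot>\<^sub>m triu (M\<^sup>T * (1\<^sub>m n + mat n n (\<lambda>(i,j). \<Sum>m. star_pow A (Suc m) $$ (i,j))))) U)"
    using M by (auto simp: Let_def star_series_def)
qed

end
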